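(* Let $\mathcal{X}=\{1,\dots,n\}$, let $\pi$ be a strictly positive probability distribution on $\mathcal{X}$, let $P$ be a transition matrix with $\pi P=\pi$, let $2\le k\le n$ and $\alpha\in[0,1]$. For a partition $(\mathcal{O}_i)_{i=1}^k$ of $\mathcal{X}$ into nonempty proper subsets let $A_\alpha=\alpha P+(1-\alpha)G$ with $G$ its Gibbs kernel. Then $$\min_{\mathcal{O}_1,\dots,\mathcal{O}_k}\mathrm{KL}_\pi(A_\alpha\|\Pi)\le\alpha\,\mathrm{KL}_\pi(P\|\Pi)-(1-\alpha)\Big(\sum_{i=1}^{k-1}\pi(i)\log\pi(i)+\Big(\sum_{j=k}^n\pi(j)\Big)\log\sum_{j=k}^n\pi(j)\Big).$$
   Context: Gibbs kernel: $G(x,y)=\pi(y)/\pi(\mathcal{O}(x))$ if $y\in\mathcal{O}(x)$ and $0$ otherwise, $\mathcal{O}(x)$ the block containing $x$, $\pi(\mathcal{O})=\sum_{z\in\mathcal{O}}\pi(z)$. $\Pi$ is the matrix with every row equal to $\pi$. $\mathrm{KL}_\pi(P\|Q)=\sum_{x,y}\pi(x)P(x,y)\log\frac{P(x,y)}{Q(x,y)}$ with $0\log(0/a)=0$. *)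

theory Defs
  imports "HOL-Library.Disjoint_Sets" Complex_Main
begin

text \<open>State space X = {1..n}; distributions and kernels are real-valued functions on nat,
  only their values on {1..n} matter.\<close>

definition block :: "nat set set \<Rightarrow> nat \<Rightarrow> nat set" where
  "block Os x = (THE B. B \<in> Os \<and> x \<in> B)"

definition gibbs :: "(nat \<Rightarrow> real) \<Rightarrow> nat set set \<Rightarrow> nat \<Rightarrow> nat \<Rightarrow> real" where
  "gibbs \<pi> Os x y = (if y \<in> block Os x then \<pi> y / (\<Sum>z\<in>block Os x. \<pi> z) else 0)"

definition Pi_mat :: "(nat \<Rightarrow> real) \<Rightarrow> nat \<Rightarrow> nat \<Rightarrow> real" where
  "Pi_mat \<pi> x y = \<pi> y"

definition KL :: "nat \<Rightarrow> (nat \<Rightarrow> real) \<Rightarrow> (nat \<Rightarrow> nat \<Rightarrow> real) \<Rightarrow> (nat \<Rightarrow> nat \<Rightarrow> real) \<Rightarrow> real" where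
  "KL n \<pi> P Q = (\<Sum>x\<in>{1..n}. \<Sum>y\<in>{1..n}.
      (if P x y = 0 then 0 else \<pi> x * P x y * ln (P x y / Q x y)))"

definition transition_matrix :: "nat \<Rightarrow> (nat \<Rightarrow> nat \<Rightarrow> real) \<Rightarrow> bool" where
  "transition_matrix n P \<longleftrightarrow> (\<forall>x\<in>{1..n}. (\<forall>y\<in>{1..n}. P x y \<ge> 0) \<and> (\<Sum>y\<in>{1..n}. P x y) = 1)"

end

theory Submission
  imports Defs "HOL-Analysis.Convex"
begin

text \<open>
  The minimum is at most the value at the partition into the singletons \<open>{1}, \<dots>, {k-1}\<close>
  and the tail \<open>{k..n}\<close>.  Since \<open>t \<mapsto> t ln (t / q)\<close> is convex on \<open>[0, \<infinity>)\<close>, the divergence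
  \<open>KL\<^sub>\<pi>(A \<parallel> \<Pi>)\<close> is convex in \<open>A\<close>, so \<open>KL\<^sub>\<pi>(A\<^sub>\<alpha> \<parallel> \<Pi>) \<le> \<alpha> KL\<^sub>\<pi>(P \<parallel> \<Pi>) + (1 - \<alpha>) KL\<^sub>\<pi>(G \<parallel> \<Pi>)\<close>.
  For any partition, \<open>KL\<^sub>\<pi>(G \<parallel> \<Pi>)\<close> is the Shannon entropy of the block masses \<open>\<pi>(\<O>)\<close>, because
  row \<open>x\<close> of \<open>G\<close> is \<open>\<Pi>\<close> conditioned on the block of \<open>x\<close>; for the partition above this
  entropy is the bracket on the right-hand side.
\<close>

definition rel_entr :: "real \<Rightarrow> real \<Rightarrow> real" where
  "rel_entr t q = (if t = 0 then 0 else t * ln (t / q))"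

lemma rel_entr_ge_diff:
  assumes "0 \<le> t" "0 < q"
  shows "t - q \<le> rel_entr t q"
proof (cases "t = 0")
  case False
  then have t: "0 < t" using assms by simp
  have "1 - q / t \<le> ln (t / q)"
    using ln_le_minus_one[of "q / t"] t assms by (simp add: ln_div)
  from mult_left_mono[OF this, of t] t False show ?thesis
    by (simp add: rel_entr_def right_diff_distrib)
qed (use assms in \<open>simp add: rel_entr_def\<close>)

lemma rel_entr_change_base:
  assumes "0 \<le> t" "0 < c" "0 < q"
  shows "rel_entr t q = rel_entr t c + t * ln (c / q)"
proof (cases "t = 0")
  case False
  then have "ln (t / q) = ln (t / c) + ln (c / q)" using assms by (simp add: ln_div)
  then show ?thesis using False by (simp add: rel_entr_def algebra_simps)
qed (simp add: rel_entr_def)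

lemma convex_on_rel_entr:
  assumes q: "0 < q"
  shows "convex_on {0..} (\<lambda>t. rel_entr t q)"
proof (rule convex_onI)
  fix s a b :: real
  assume s: "0 < s" "s < 1" and a: "a \<in> {0..}" and b: "b \<in> {0..}"
  define c where "c = (1 - s) * a + s * b"
  have parts: "0 \<le> (1 - s) * a" "0 \<le> s * b" using s a b by simp_all
  have "rel_entr c q \<le> (1 - s) * rel_entr a q + s * rel_entr b q"
  proof (cases "c = 0")
    case True
    with parts have "(1 - s) * a = 0" "s * b = 0" unfolding c_def by linarith+
    with s have "a = 0" "b = 0" by simp_all
    then show ?thesis using True by (simp add: rel_entr_def)
  next
    case False
    then have c: "0 < c" using parts unfolding c_def by linarith
    have "c * ln (c / q) = (1 - s) * (a - c) + s * (b - c) + c * ln (c / q)"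
      by (simp add: c_def algebra_simps)
    also have "\<dots> \<le> (1 - s) * rel_entr a c + s * rel_entr b c + c * ln (c / q)"
      using rel_entr_ge_diff[OF _ c, of a] rel_entr_ge_diff[OF _ c, of b] a b s
      by (smt (verit) atLeast_iff mult_left_mono)
    also have "\<dots> = (1 - s) * rel_entr a q + s * rel_entr b q"
      using rel_entr_change_base[OF _ c q, of a] rel_entr_change_base[OF _ c q, of b] a b
      by (simp add: c_def algebra_simps)
    finally show ?thesis using False by (simp add: rel_entr_def)
  qed
  then show "rel_entr ((1 - s) *\<^sub>R a + s *\<^sub>R b) q \<le> (1 - s) * rel_entr a q + s * rel_entr b q"
    by (simp add: c_def)
qed simp

lemma KL_eq_sum_rel_entr:
  "KL n \<pi> P Q = (\<Sum>x\<in>{1..n}. \<Sum>y\<in>{1..n}. \<pi> x * rel_entr (P x y) (Q x y))"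
  unfolding KL_def rel_entr_def by (intro sum.cong refl) auto

lemma KL_convex_left:
  assumes \<pi>: "\<And>x. x \<in> {1..n} \<Longrightarrow> 0 \<le> \<pi> x"
    and Q: "\<And>x y. x \<in> {1..n} \<Longrightarrow> y \<in> {1..n} \<Longrightarrow> 0 < Q x y"
    and P: "\<And>x y. x \<in> {1..n} \<Longrightarrow> y \<in> {1..n} \<Longrightarrow> 0 \<le> P x y"
    and G: "\<And>x y. x \<in> {1..n} \<Longrightarrow> y \<in> {1..n} \<Longrightarrow> 0 \<le> G x y"
    and \<alpha>: "0 \<le> \<alpha>" "\<alpha> \<le> 1"
  shows "KL n \<pi> (\<lambda>x y. \<alpha> * P x y + (1 - \<alpha>) * G x y) Q
         \<le> \<alpha> * KL n \<pi> P Q + (1 - \<alpha>) * KL n \<pi> G Q"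
  unfolding KL_eq_sum_rel_entr sum_distrib_left sum.distrib[symmetric]
proof (intro sum_mono)
  fix x y assume x: "x \<in> {1..n}" and y: "y \<in> {1..n}"
  have "rel_entr (\<alpha> * P x y + (1 - \<alpha>) * G x y) (Q x y)
        \<le> \<alpha> * rel_entr (P x y) (Q x y) + (1 - \<alpha>) * rel_entr (G x y) (Q x y)"
    using convex_onD[OF convex_on_rel_entr[OF Q[OF x y]], of "1 - \<alpha>" "P x y" "G x y"]
      P[OF x y] G[OF x y] \<alpha> by simp
  from mult_left_mono[OF this \<pi>[OF x]]
  show "\<pi> x * rel_entr (\<alpha> * P x y + (1 - \<alpha>) * G x y) (Q x y)
        \<le> \<alpha> * (\<pi> x * rel_entr (P x y) (Q x y)) + (1 - \<alpha>) * (\<pi> x * rel_entr (G x y) (Q x y))"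
    by (simp add: algebra_simps)
qed

lemma block_eq:
  assumes "partition_on A Os" "B \<in> Os" "x \<in> B"
  shows "block Os x = B"
  unfolding block_def
proof (rule the_equality)
  fix B' assume "B' \<in> Os \<and> x \<in> B'"
  then show "B' = B" using assms by (auto simp: partition_on_def disjoint_def)
qed (use assms in simp)

lemma block_mem:
  assumes "partition_on A Os" "x \<in> A"
  shows "block Os x \<in> Os"
proof -
  obtain B where "B \<in> Os" "x \<in> B" using assms partition_onD1 by blast
  then show ?thesis using block_eq[OF assms(1)] by simp
qed

lemma gibbs_nonneg:
  assumes Os: "partition_on A Os" and \<pi>: "\<And>x. x \<in> A \<Longrightarrow> 0 \<le> \<pi> x" and x: "x \<in> A"
  shows "0 \<le> gibbs \<pi> Os x y"
proof -
  have "block Os x \<subseteq> A" using block_mem[OF Os x] partition_onD1[OF Os] by blast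
  then show ?thesis using \<pi> by (auto simp: gibbs_def intro!: divide_nonneg_nonneg sum_nonneg)
qed

lemma KL_gibbs_Pi_mat:
  assumes Os: "partition_on {1..n} Os" and \<pi>: "\<And>x. x \<in> {1..n} \<Longrightarrow> 0 < \<pi> x"
  shows "KL n \<pi> (gibbs \<pi> Os) (Pi_mat \<pi>) = - (\<Sum>B\<in>Os. sum \<pi> B * ln (sum \<pi> B))"
proof -
  have row: "(\<Sum>y\<in>{1..n}. \<pi> x * rel_entr (gibbs \<pi> Os x y) (\<pi> y)) = - (\<pi> x * ln (sum \<pi> B))"
    if B: "B \<in> Os" and x: "x \<in> B" for B x
  proof -
    have sub: "B \<subseteq> {1..n}" using B partition_onD1[OF Os] by blast
    then have fin: "finite B" by (rule finite_subset) simp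
    have pos_B: "0 < \<pi> y" if "y \<in> B" for y using that sub \<pi> by blast
    have s: "0 < sum \<pi> B" using x pos_B by (intro sum_pos fin) auto
    have g: "gibbs \<pi> Os x y = (if y \<in> B then \<pi> y / sum \<pi> B else 0)" for y
      using block_eq[OF Os B x] by (simp add: gibbs_def)
    have "(\<Sum>y\<in>{1..n}. \<pi> x * rel_entr (gibbs \<pi> Os x y) (\<pi> y))
          = (\<Sum>y\<in>B. \<pi> x * rel_entr (gibbs \<pi> Os x y) (\<pi> y))"
      using sub by (intro sum.mono_neutral_right) (auto simp: g rel_entr_def)
    also have "\<dots> = (\<Sum>y\<in>B. (\<pi> x * ln (1 / sum \<pi> B) / sum \<pi> B) * \<pi> y)"
    proof (intro sum.cong refl)
      fix y assume "y \<in> B"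
      with pos_B[of y] s
      show "\<pi> x * rel_entr (gibbs \<pi> Os x y) (\<pi> y) = (\<pi> x * ln (1 / sum \<pi> B) / sum \<pi> B) * \<pi> y"
        by (simp add: g rel_entr_def)
    qed
    also have "\<dots> = (\<pi> x * ln (1 / sum \<pi> B) / sum \<pi> B) * sum \<pi> B"
      by (rule sum_distrib_left[symmetric])
    also have "\<dots> = - (\<pi> x * ln (sum \<pi> B))"
      using s by (simp add: ln_div)
    finally show ?thesis .
  qed
  have "KL n \<pi> (gibbs \<pi> Os) (Pi_mat \<pi>)
        = (\<Sum>B\<in>Os. \<Sum>x\<in>B. \<Sum>y\<in>{1..n}. \<pi> x * rel_entr (gibbs \<pi> Os x y) (\<pi> y))"
    unfolding KL_eq_sum_rel_entr Pi_mat_def by (rule sum.partition[OF _ Os]) simp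
  also have "\<dots> = (\<Sum>B\<in>Os. \<Sum>x\<in>B. - (\<pi> x * ln (sum \<pi> B)))"
    using row by (intro sum.cong refl) simp
  also have "\<dots> = - (\<Sum>B\<in>Os. sum \<pi> B * ln (sum \<pi> B))"
    by (simp add: sum_negf sum_distrib_right)
  finally show ?thesis .
qed

definition tail_partition :: "nat \<Rightarrow> nat \<Rightarrow> nat set set" where
  "tail_partition n k = insert {k..n} ((\<lambda>i. {i}) ` {1..k-1})"

lemma tail_notin_singletons: "{k..n::nat} \<notin> (\<lambda>i. {i}) ` {1..k-1}"
proof
  assume "{k..n} \<in> (\<lambda>i. {i}) ` {1..k-1}"
  then obtain i where i: "1 \<le> i" "i \<le> k - 1" "{k..n} = {i}" by auto
  then have "k \<le> i" by (metis atLeastAtMost_iff singletonI)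
  with i(1,2) show False by arith
qed

lemma partition_on_tail_partition:
  assumes "1 \<le> k" "k \<le> n"
  shows "partition_on {1..n} (tail_partition n k)"
  using assms unfolding tail_partition_def partition_on_def disjoint_def by auto

lemma card_tail_partition:
  assumes "1 \<le> k"
  shows "card (tail_partition n k) = k"
  using assms tail_notin_singletons[of k n]
  by (simp add: tail_partition_def card_image inj_on_def)

lemma tail_partition_proper:
  assumes "2 \<le> k" "k \<le> n" "B \<in> tail_partition n k"
  shows "B \<noteq> {} \<and> B \<subset> {1..n}"
  using assms(3) unfolding tail_partition_def
proof (elim insertE imageE)
  assume B: "B = {k..n}"
  then have "k \<in> B" "1 \<notin> B" "B \<subseteq> {1..n}" using assms(1,2) by auto
  then show ?thesis using assms(2) by auto
next
  fix i assume "i \<in> {1..k-1}" and B: "B = {i}"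
  then have "i \<in> B" "n \<notin> B" "B \<subseteq> {1..n}" using assms(1,2) by auto
  then show ?thesis by auto
qed

lemma sum_tail_partition:
  "(\<Sum>B\<in>tail_partition n k. f B) = (\<Sum>i=1..k-1. f {i}) + f {k..n}"
  using tail_notin_singletons[of k n]
  by (simp add: tail_partition_def sum.reindex inj_on_def add.commute)

theorem corollary5p5:
  fixes n k :: nat and \<pi> :: "nat \<Rightarrow> real" and P :: "nat \<Rightarrow> nat \<Rightarrow> real" and \<alpha> :: real
  assumes pos: "\<forall>x\<in>{1..n}. \<pi> x > 0"
    and prob: "(\<Sum>x\<in>{1..n}. \<pi> x) = 1"
    and trans: "transition_matrix n P"
    and stat: "\<forall>y\<in>{1..n}. (\<Sum>x\<in>{1..n}. \<pi> x * P x y) = \<pi> y"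
    and k: "2 \<le> k" "k \<le> n"
    and alpha: "0 \<le> \<alpha>" "\<alpha> \<le> 1"
  shows "Min {KL n \<pi> (\<lambda>x y. \<alpha> * P x y + (1 - \<alpha>) * gibbs \<pi> Os x y) (Pi_mat \<pi>) | Os.
              partition_on {1..n} Os \<and> card Os = k \<and> (\<forall>B\<in>Os. B \<noteq> {} \<and> B \<subset> {1..n})}
         \<le> \<alpha> * KL n \<pi> P (Pi_mat \<pi>)
           - (1 - \<alpha>) * ((\<Sum>i=1..k-1. \<pi> i * ln (\<pi> i))
                        + (\<Sum>j=k..n. \<pi> j) * ln (\<Sum>j=k..n. \<pi> j))"
proof -
  let ?T = "tail_partition n k"
  let ?KL\<^sub>\<alpha> = "\<lambda>Os. KL n \<pi> (\<lambda>x y. \<alpha> * P x y + (1 - \<alpha>) * gibbs \<pi> Os x y) (Pi_mat \<pi>)"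
  let ?adm = "\<lambda>Os. partition_on {1..n} Os \<and> card Os = k \<and> (\<forall>B\<in>Os. B \<noteq> {} \<and> B \<subset> {1..n})"
  have T: "partition_on {1..n} ?T" using partition_on_tail_partition k by simp
  have KL_gibbs_tail: "KL n \<pi> (gibbs \<pi> ?T) (Pi_mat \<pi>)
      = - ((\<Sum>i=1..k-1. \<pi> i * ln (\<pi> i)) + (\<Sum>j=k..n. \<pi> j) * ln (\<Sum>j=k..n. \<pi> j))"
    using KL_gibbs_Pi_mat[OF T, of \<pi>] pos by (simp add: sum_tail_partition)
  have "finite {?KL\<^sub>\<alpha> Os | Os. ?adm Os}"
    by (rule finite_image_set) (auto intro: rev_finite_subset[OF finitely_many_partition_on])
  moreover have "?adm ?T" using T card_tail_partition tail_partition_proper k by simp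
  ultimately have "Min {?KL\<^sub>\<alpha> Os | Os. ?adm Os} \<le> ?KL\<^sub>\<alpha> ?T" by (auto intro: Min_le)
  also have "\<dots> \<le> \<alpha> * KL n \<pi> P (Pi_mat \<pi>) + (1 - \<alpha>) * KL n \<pi> (gibbs \<pi> ?T) (Pi_mat \<pi>)"
    using pos trans gibbs_nonneg[OF T] alpha
    by (intro KL_convex_left) (auto simp: Pi_mat_def transition_matrix_def less_imp_le)
  also have "\<dots> = \<alpha> * KL n \<pi> P (Pi_mat \<pi>)
           - (1 - \<alpha>) * ((\<Sum>i=1..k-1. \<pi> i * ln (\<pi> i))
                        + (\<Sum>j=k..n. \<pi> j) * ln (\<Sum>j=k..n. \<pi> j))"
    by (simp only: KL_gibbs_tail mult_minus_right diff_conv_add_uminus)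
  finally show ?thesis .
qed

end
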